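(* Let $q\ge5$ be a prime power and let $\mathcal{C}_\mathscr{C}$ be the $[q+1,q-3,5]_q$ code with parity check matrix whose columns are the vectors $(1,t,t^2,t^3)$, $t\in\mathbb{F}_q$, and $(0,0,0,1)$. Let $W\in\{2,3\}$ and let $\mathcal{V}^{(W)}_a,\mathcal{V}^{(W)}_b$ be two weight-$W$ cosets of $\mathcal{C}_\mathscr{C}$ with distinct weight distributions. Then for $4\le w\le q+1$, $$B_{w}(\mathcal{V}^{(W)}_a)-B_w(\mathcal{V}^{(W)}_b)=-(-1)^w\left[B_3(\mathcal{V}^{(W)}_a)-B_3(\mathcal{V}^{(W)}_b)\right]\binom{q-2}{w-3}.$$
   Context: A coset of a linear code $\mathcal{C}\subseteq\mathbb{F}_q^n$ is a set $\mathbf{v}+\mathcal{C}$; its weight is the minimum Hamming weight of its vectors. $B_w(\mathcal{V})$ is the number of vectors of Hamming weight $w$ in the coset $\mathcal{V}$; the weight distribution of $\mathcal{V}$ is $(B_w(\mathcal{V}))_{w}$. *)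

theory Defs
  imports Main "HOL-Library.Cardinality"
begin

text \<open>Coordinates of F_q^(q+1) are indexed by 'a option: Some t corresponds to the
column (1,t,t^2,t^3), None to the column (0,0,0,1).\<close>

definition hweight :: "('i::finite \<Rightarrow> 'a::zero) \<Rightarrow> nat" where
  "hweight x = card {i. x i \<noteq> 0}"

definition pcm :: "nat \<Rightarrow> 'a option \<Rightarrow> 'a::field" where
  "pcm j i = (case i of Some t \<Rightarrow> t ^ j | None \<Rightarrow> (if j = 3 then 1 else 0))"

definition Ccode :: "('a::{finite,field} option \<Rightarrow> 'a) set" where
  "Ccode = {c. \<forall>j<4. (\<Sum>i\<in>UNIV. pcm j i * c i) = 0}"

definition coset :: "('a::{finite,field} option \<Rightarrow> 'a) \<Rightarrow> ('a option \<Rightarrow> 'a) set" where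
  "coset v = (\<lambda>c. (\<lambda>i. v i + c i)) ` Ccode"

definition coset_weight :: "('i::finite \<Rightarrow> 'a::zero) set \<Rightarrow> nat" where
  "coset_weight V = Min (hweight ` V)"

definition Bw :: "nat \<Rightarrow> ('i::finite \<Rightarrow> 'a::zero) set \<Rightarrow> nat" where
  "Bw w V = card {x\<in>V. hweight x = w}"

end

(*
  The code is MDS with minimum distance 5: a nonzero codeword of weight at most 4 would give,
  after combining the four parity checks with the coefficients of the polynomial vanishing on
  all but one point of its support, a single nonzero term equal to zero. Hence the syndrome map
  is a bijection on vectors supported in any 4 coordinates, and for |T| >= 4 every coset contains
  exactly as many vectors supported in T as the code itself. Counting the pairs (x, T) with
  |T| = m and supp x contained in T gives, for m >= 4, sum_k B_k (n-k choose m-k) independently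
  of the coset. Cosets of weight W in {2,3} also agree on B_0, B_1, B_2 (a weight-2 vector of a
  coset is unique), so the differences d_k = B_k(V_a) - B_k(V_b) vanish for k < 3 and solve a
  triangular binomial system, whose solution is d_w = (-1)^(w-3) (q-2 choose w-3) d_3.
*)
theory Submission
  imports Defs "HOL-Computational_Algebra.Polynomial" "HOL-Library.FuncSet"
begin

definition syndrome :: "('a::{finite,field} option \<Rightarrow> 'a) \<Rightarrow> nat \<Rightarrow> 'a" where
  "syndrome x j = (\<Sum>i\<in>UNIV. pcm j i * x i)"

lemma sum_UNIV_option:
  fixes f :: "'a::finite option \<Rightarrow> 'b::comm_monoid_add"
  shows "(\<Sum>i\<in>UNIV. f i) = f None + (\<Sum>t\<in>UNIV. f (Some t))"
  by (simp add: UNIV_option_conv sum.reindex)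

lemma syndrome_add: "syndrome (\<lambda>i. x i + y i) j = syndrome x j + syndrome y j"
  by (simp add: syndrome_def distrib_left sum.distrib)

lemma syndrome_diff: "syndrome (\<lambda>i. x i - y i) j = syndrome x j - syndrome y j"
  by (simp add: syndrome_def right_diff_distrib sum_subtractf)

lemma mem_Ccode_iff: "c \<in> Ccode \<longleftrightarrow> (\<forall>j<4. syndrome c j = 0)"
  by (simp add: Ccode_def syndrome_def)

lemma diff_mem_Ccode_iff: "(\<lambda>i. x i - y i) \<in> Ccode \<longleftrightarrow> (\<forall>j<4. syndrome x j = syndrome y j)"
  by (simp add: mem_Ccode_iff syndrome_diff)

lemma mem_coset_iff: "x \<in> coset v \<longleftrightarrow> (\<forall>j<4. syndrome x j = syndrome v j)"
proof
  assume "x \<in> coset v"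
  then obtain c where "c \<in> Ccode" "x = (\<lambda>i. v i + c i)"
    by (auto simp: coset_def)
  then show "\<forall>j<4. syndrome x j = syndrome v j"
    by (simp add: syndrome_add mem_Ccode_iff)
next
  assume "\<forall>j<4. syndrome x j = syndrome v j"
  then have "(\<lambda>i. x i - v i) \<in> Ccode"
    by (simp add: diff_mem_Ccode_iff)
  then show "x \<in> coset v"
    unfolding coset_def by (rule rev_image_eqI) simp
qed

lemma syndrome_poly_combination:
  fixes p :: "'a::{finite,field} poly"
  assumes "degree p < 4"
  shows "(\<Sum>k<4. coeff p k * syndrome c k)
       = coeff p 3 * c None + (\<Sum>t\<in>UNIV. c (Some t) * poly p t)"
proof -
  have poly_p: "poly p t = (\<Sum>k<4. coeff p k * t ^ k)" for t
    unfolding poly_altdef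
    by (rule sum.mono_neutral_left) (use assms in \<open>auto simp: coeff_eq_0\<close>)
  have "(\<Sum>k<4. coeff p k * syndrome c k)
      = (\<Sum>k<4. coeff p k * pcm k None * c None)
        + (\<Sum>k<4. \<Sum>t\<in>UNIV. c (Some t) * (coeff p k * t ^ k))"
    by (simp add: syndrome_def sum_UNIV_option pcm_def distrib_left sum.distrib
        sum_distrib_left mult_ac)
  also have "(\<Sum>k<4. coeff p k * pcm k None * c None) = coeff p 3 * c None"
    by (simp add: pcm_def eval_nat_numeral lessThan_Suc)
  also have "(\<Sum>k<4. \<Sum>t\<in>UNIV. c (Some t) * (coeff p k * t ^ k))
      = (\<Sum>t\<in>UNIV. c (Some t) * poly p t)"
    by (simp add: poly_p sum_distrib_left sum.swap[of _ "{..<4::nat}"])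
  finally show ?thesis .
qed

lemma hweight_option:
  fixes c :: "'a::finite option \<Rightarrow> 'b::zero"
  shows "hweight c = card {t. c (Some t) \<noteq> 0} + (if c None = 0 then 0 else 1)"
proof -
  let ?S = "Some ` {t. c (Some t) \<noteq> 0}"
  have "{i. c i \<noteq> 0} = (if c None = 0 then ?S else insert None ?S)"
    by (auto simp: image_iff) (metis not_None_eq)+
  then show ?thesis
    by (simp add: hweight_def card_image)
qed

lemma Ccode_hweight_le_4_eq_zero:
  fixes c :: "'a::{finite,field} option \<Rightarrow> 'a"
  assumes "c \<in> Ccode" and "hweight c \<le> 4"
  shows "c = (\<lambda>_. 0)"
proof -
  let ?P = "{t. c (Some t) \<noteq> 0}"
  have card_P: "card ?P + (if c None = 0 then 0 else 1) \<le> 4"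
    using assms(2) by (simp add: hweight_option)
  have Some_eq_0: "c (Some t0) = 0" for t0
  proof (rule ccontr)
    assume t0: "c (Some t0) \<noteq> 0"
    define p where "p = (\<Prod>u\<in>?P - {t0}. [:-u, 1:])"
    have "degree p \<le> card (?P - {t0})"
      unfolding p_def using degree_prod_sum_le[of "?P - {t0}" "\<lambda>u. [:-u, 1:]"] by simp
    then have deg_p: "degree p + 1 + (if c None = 0 then 0 else 1) \<le> 4"
      using card_P card_Suc_Diff1[of ?P t0] t0 by (simp split: if_splits)
    then have "coeff p 3 * c None = 0"
      by (auto simp: coeff_eq_0)
    moreover have "(\<Sum>t\<in>UNIV. c (Some t) * poly p t) = c (Some t0) * poly p t0"
    proof -
      have "poly p t = 0" if "t \<in> ?P - {t0}" for t
        using that by (auto simp: p_def poly_prod)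
      then have "(\<Sum>t\<in>UNIV. c (Some t) * poly p t) = (\<Sum>t\<in>{t0}. c (Some t) * poly p t)"
        by (intro sum.mono_neutral_right) auto
      then show ?thesis by simp
    qed
    ultimately have "(\<Sum>k<4. coeff p k * syndrome c k) = c (Some t0) * poly p t0"
      using deg_p by (simp add: syndrome_poly_combination)
    moreover have "(\<Sum>k<4. coeff p k * syndrome c k) = 0"
      using assms(1) by (simp add: mem_Ccode_iff)
    moreover have "poly p t0 \<noteq> 0"
      by (auto simp: p_def poly_prod)
    ultimately show False
      using t0 by simp
  qed
  then have "c None = syndrome c 3"
    by (simp add: syndrome_def sum_UNIV_option pcm_def)
  also have "\<dots> = 0"
    using assms(1) by (simp add: mem_Ccode_iff)
  finally show ?thesis
    using Some_eq_0 by (metis not_None_eq)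
qed

definition supported_on :: "'i set \<Rightarrow> ('i \<Rightarrow> 'b::zero) set" where
  "supported_on T = {x. \<forall>i. i \<notin> T \<longrightarrow> x i = 0}"

lemma card_supported_on:
  "card (supported_on T :: ('i::finite \<Rightarrow> 'b::{finite,zero}) set) = CARD('b) ^ card T"
proof -
  have "bij_betw (\<lambda>x. restrict x T) (supported_on T) (T \<rightarrow>\<^sub>E (UNIV :: 'b set))"
    by (rule bij_betw_byWitness[where f' = "\<lambda>y i. if i \<in> T then y i else 0"])
      (auto simp: supported_on_def fun_eq_iff PiE_def extensional_def)
  then show ?thesis
    by (simp add: bij_betw_same_card card_funcsetE)
qed

lemma hweight_le_card_if_supported_on:
  fixes x :: "'i::finite \<Rightarrow> 'b::zero"
  shows "x \<in> supported_on T \<Longrightarrow> hweight x \<le> card T"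
  unfolding hweight_def supported_on_def by (intro card_mono) auto

lemma exists_supported_on_syndrome:
  fixes F :: "'a::{finite,field} option set"
  assumes "card F = 4"
  shows "\<exists>z\<in>supported_on F. \<forall>j<4. syndrome z j = s j"
proof -
  let ?Phi = "\<lambda>z. restrict (syndrome z) {..<4}"
  have inj: "inj_on ?Phi (supported_on F)"
  proof (rule inj_onI)
    fix z z' assume z: "z \<in> supported_on F" "z' \<in> supported_on F" and eq: "?Phi z = ?Phi z'"
    have "syndrome z j = syndrome z' j" if "j < 4" for j
      using fun_cong[OF eq, of j] that by simp
    then have "(\<lambda>i. z i - z' i) \<in> Ccode"
      by (simp add: diff_mem_Ccode_iff)
    moreover have "hweight (\<lambda>i. z i - z' i) \<le> 4"
      using z hweight_le_card_if_supported_on[of "\<lambda>i. z i - z' i" F] assms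
      by (simp add: supported_on_def)
    ultimately have "(\<lambda>i. z i - z' i) = (\<lambda>_. 0)"
      by (rule Ccode_hweight_le_4_eq_zero)
    then show "z = z'"
      by (simp add: fun_eq_iff)
  qed
  have "card (?Phi ` supported_on F) = card (supported_on F :: ('a option \<Rightarrow> 'a) set)"
    by (rule card_image[OF inj])
  also have "\<dots> = CARD('a) ^ 4"
    by (simp only: card_supported_on assms)
  also have "\<dots> = card ({..<4::nat} \<rightarrow>\<^sub>E (UNIV :: 'a set))"
    by (simp add: card_funcsetE)
  finally have card_eq: "card (?Phi ` supported_on F) = card ({..<4::nat} \<rightarrow>\<^sub>E (UNIV :: 'a set))" .
  have sub: "?Phi ` supported_on F \<subseteq> {..<4} \<rightarrow>\<^sub>E UNIV"
    by (intro image_subsetI restrict_PiE_iff[THEN iffD2] ballI UNIV_I)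
  have fin: "finite ({..<4::nat} \<rightarrow>\<^sub>E (UNIV :: 'a set))"
    by (simp add: finite_PiE)
  have "restrict s {..<4} \<in> ?Phi ` supported_on F"
    using card_subset_eq[OF fin sub card_eq] by simp
  then obtain z where z: "restrict s {..<4} = ?Phi z" "z \<in> supported_on F"
    by (rule imageE)
  have "syndrome z j = s j" if "j < 4" for j
    using fun_cong[OF z(1), of j] that by simp
  with z(2) show ?thesis
    by blast
qed

lemma card_coset_supported_on:
  fixes T :: "'a::{finite,field} option set"
  assumes "4 \<le> card T"
  shows "card (coset v \<inter> supported_on T) = card (Ccode \<inter> supported_on T)"
proof -
  obtain F where "F \<subseteq> T" "card F = 4"
    using assms obtain_subset_with_card_n by metis
  then obtain z where z: "z \<in> supported_on T" "z \<in> coset v"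
    using exists_supported_on_syndrome[of F "syndrome v"]
    by (auto simp: mem_coset_iff supported_on_def)
  have "bij_betw (\<lambda>x i. x i - z i) (coset v \<inter> supported_on T) (Ccode \<inter> supported_on T)"
    by (rule bij_betw_byWitness[where f' = "\<lambda>c i. c i + z i"])
      (use z in \<open>auto simp: supported_on_def mem_coset_iff diff_mem_Ccode_iff
        mem_Ccode_iff syndrome_add\<close>)
  then show ?thesis
    by (rule bij_betw_same_card)
qed

lemma card_supersets:
  fixes S :: "'i::finite set"
  shows "card {T. card T = m \<and> S \<subseteq> T}
     = (if card S \<le> m then (CARD('i) - card S) choose (m - card S) else 0)"
proof (cases "card S \<le> m")
  case False
  then have "{T. card T = m \<and> S \<subseteq> T} = {}"
    using card_mono[of _ S] by fastforce
  then show ?thesis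
    using False by simp
next
  case True
  have "bij_betw (\<lambda>T. T - S) {T. card T = m \<and> S \<subseteq> T} {U. U \<subseteq> - S \<and> card U = m - card S}"
  proof (rule bij_betw_byWitness[where f' = "\<lambda>U. U \<union> S"])
    show "(\<lambda>U. U \<union> S) ` {U. U \<subseteq> - S \<and> card U = m - card S} \<subseteq> {T. card T = m \<and> S \<subseteq> T}"
      using True by (auto simp: card_Un_disjoint disjoint_eq_subset_Compl)
  qed (auto simp: card_Diff_subset)
  then have "card {T. card T = m \<and> S \<subseteq> T} = card {U. U \<subseteq> - S \<and> card U = m - card S}"
    by (rule bij_betw_same_card)
  also have "\<dots> = (CARD('i) - card S) choose (m - card S)"
    by (simp add: n_subsets Compl_eq_Diff_UNIV card_Diff_subset)
  finally show ?thesis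
    using True by simp
qed

lemma sum_card_supported_on:
  fixes V :: "('i::finite \<Rightarrow> 'b::{finite,zero}) set"
  shows "(\<Sum>T | card T = m. card (V \<inter> supported_on T))
       = (\<Sum>k\<le>m. Bw k V * ((CARD('i) - k) choose (m - k)))"
proof -
  let ?C = "\<lambda>k. (CARD('i) - k) choose (m - k)"
  have "x \<in> supported_on T \<longleftrightarrow> {i. x i \<noteq> 0} \<subseteq> T" for x :: "'i \<Rightarrow> 'b" and T
    by (auto simp: supported_on_def)
  then have "(\<Sum>T | card T = m. card (V \<inter> supported_on T))
      = (\<Sum>T | card T = m. \<Sum>x\<in>V. of_bool ({i. x i \<noteq> 0} \<subseteq> T))"
    by (simp add: Int_def)
  also have "\<dots> = (\<Sum>x\<in>V. card {T. card T = m \<and> {i. x i \<noteq> 0} \<subseteq> T})"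
    by (subst sum.swap) (simp add: Int_def conj_commute)
  also have "\<dots> = (\<Sum>x\<in>V. \<Sum>k\<le>m. if hweight x = k then ?C k else 0)"
    by (simp add: card_supersets hweight_def)
  also have "\<dots> = (\<Sum>k\<le>m. Bw k V * ?C k)"
    by (subst sum.swap) (simp add: Bw_def sum.inter_filter[symmetric])
  finally show ?thesis .
qed

lemma hweight_diff_le:
  fixes x y :: "'i::finite \<Rightarrow> 'b::group_add"
  shows "hweight (\<lambda>i. x i - y i) \<le> hweight x + hweight y"
proof -
  have "card {i. x i - y i \<noteq> 0} \<le> card ({i. x i \<noteq> 0} \<union> {i. y i \<noteq> 0})"
    by (intro card_mono) auto
  then show ?thesis
    unfolding hweight_def using card_Un_le order_trans by blast
qed

lemma Bw_eq_0_if_less_coset_weight: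
  fixes V :: "('i::finite \<Rightarrow> 'b::zero) set"
  assumes "k < coset_weight V"
  shows "Bw k V = 0"
proof -
  have "finite (hweight ` V)"
    by (rule finite_subset[of _ "{..CARD('i)}"]) (auto simp: hweight_def card_mono)
  then have "{x \<in> V. hweight x = k} = {}"
    using assms Min_le by (fastforce simp: coset_weight_def)
  then show ?thesis
    unfolding Bw_def by (simp only: card.empty)
qed

lemma Bw_2_if_coset_weight_2:
  fixes v :: "'a::{finite,field} option \<Rightarrow> 'a"
  assumes "coset_weight (coset v) = 2"
  shows "Bw 2 (coset v) = 1"
proof -
  have "v \<in> coset v"
    by (simp add: mem_coset_iff)
  then have "Min (hweight ` coset v) \<in> hweight ` coset v"
    by (intro Min_in) auto
  then obtain x0 where x0: "x0 \<in> coset v" "hweight x0 = 2"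
    using assms by (auto simp: coset_weight_def)
  have "x = x0" if "x \<in> coset v" "hweight x = 2" for x
  proof -
    have "(\<lambda>i. x i - x0 i) \<in> Ccode"
      using that x0 by (simp add: diff_mem_Ccode_iff mem_coset_iff)
    moreover have "hweight (\<lambda>i. x i - x0 i) \<le> 4"
      using hweight_diff_le[of x x0] that x0 by simp
    ultimately have "(\<lambda>i. x i - x0 i) = (\<lambda>_. 0)"
      by (rule Ccode_hweight_le_4_eq_zero)
    then show ?thesis
      by (simp add: fun_eq_iff)
  qed
  then have "{x \<in> coset v. hweight x = 2} = {x0}"
    using x0 by blast
  then show ?thesis
    by (simp add: Bw_def)
qed

lemma binomial_triangular_system:
  fixes e :: "nat \<Rightarrow> 'a::comm_ring_1"
  assumes system: "\<And>M. 0 < M \<Longrightarrow> M \<le> N \<Longrightarrow> (\<Sum>j\<le>M. e j * of_nat ((N - j) choose (M - j))) = 0"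
    and "M \<le> N"
  shows "e M = (-1) ^ M * of_nat (N choose M) * e 0"
  using assms(2)
proof (induction M rule: less_induct)
  case (less M)
  show ?case
  proof (cases "M = 0")
    case False
    have "(\<Sum>j<M. e j * of_nat ((N - j) choose (M - j)))
        = e 0 * of_nat (N choose M) * (\<Sum>j<M. (-1) ^ j * of_nat (M choose j))"
      unfolding sum_distrib_left
    proof (rule sum.cong)
      fix j assume "j \<in> {..<M}"
      then have "j < M" by simp
      have "(N choose M) * (M choose j) = (N choose j) * ((N - j) choose (M - j))"
        using \<open>j < M\<close> less.prems by (intro choose_mult) auto
      then have "of_nat (N choose j) * of_nat ((N - j) choose (M - j))
          = (of_nat (N choose M) * of_nat (M choose j) :: 'a)"
        by (metis of_nat_mult)
      moreover have "e j = (-1) ^ j * of_nat (N choose j) * e 0"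
        using less.IH[OF \<open>j < M\<close>] less.prems \<open>j < M\<close> by simp
      ultimately show "e j * of_nat ((N - j) choose (M - j))
          = e 0 * of_nat (N choose M) * ((-1) ^ j * of_nat (M choose j))"
        by (metis (no_types, lifting) mult.assoc mult.commute mult.left_commute)
    qed simp
    also have "(\<Sum>j<M. (-1) ^ j * of_nat (M choose j)) = - ((-1) ^ M :: 'a)"
      using choose_alternating_sum[of M, where 'a = 'a] False
      by (simp add: lessThan_Suc_atMost[symmetric] eq_neg_iff_add_eq_0)
    finally have lower: "(\<Sum>j<M. e j * of_nat ((N - j) choose (M - j)))
        = - ((-1) ^ M * of_nat (N choose M) * e 0)"
      by (simp add: algebra_simps)
    have "(\<Sum>j<M. e j * of_nat ((N - j) choose (M - j))) + e M = 0"
      using system[of M] False less.prems by (simp add: lessThan_Suc_atMost[symmetric])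
    then show ?thesis
      by (simp add: lower)
  qed simp
qed

lemma binomial_triangular_system_shift:
  fixes d :: "nat \<Rightarrow> 'a::comm_ring_1"
  assumes below: "\<And>k. k < s \<Longrightarrow> d k = 0"
    and system: "\<And>m. s < m \<Longrightarrow> m \<le> N \<Longrightarrow> (\<Sum>k\<le>m. d k * of_nat ((N - k) choose (m - k))) = 0"
    and "s \<le> w" and "w \<le> N"
  shows "d w = (-1) ^ (w - s) * of_nat ((N - s) choose (w - s)) * d s"
proof -
  have "(\<Sum>j\<le>M. d (j + s) * of_nat ((N - s - j) choose (M - j))) = 0"
    if "0 < M" "M \<le> N - s" for M
  proof -
    have "(\<Sum>j\<le>M. d (j + s) * of_nat ((N - s - j) choose (M - j)))
        = (\<Sum>j\<le>M. d (j + s) * of_nat ((N - (j + s)) choose (M + s - (j + s))))"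
      by (simp add: add.commute)
    also have "\<dots> = (\<Sum>k\<in>{s..M + s}. d k * of_nat ((N - k) choose (M + s - k)))"
      by (rule sum.shift_bounds_cl_nat_ivl[of _ 0 s M, simplified atLeast0AtMost add_0, symmetric])
    also have "\<dots> = (\<Sum>k\<le>M + s. d k * of_nat ((N - k) choose (M + s - k)))"
      using below by (intro sum.mono_neutral_left) auto
    also have "\<dots> = 0"
      using that by (intro system) auto
    finally show ?thesis .
  qed
  then have "d (w - s + s) = (-1) ^ (w - s) * of_nat ((N - s) choose (w - s)) * d (0 + s)"
    using assms(3,4) by (intro binomial_triangular_system) auto
  then show ?thesis
    using assms(3) by simp
qed

lemma sum_Bw_coset_choose_eq:
  fixes v :: "'a::{finite,field} option \<Rightarrow> 'a"
  assumes "4 \<le> m"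
  shows "(\<Sum>k\<le>m. Bw k (coset v) * ((CARD('a option) - k) choose (m - k)))
       = (\<Sum>k\<le>m. Bw k (Ccode :: ('a option \<Rightarrow> 'a) set) * ((CARD('a option) - k) choose (m - k)))"
proof -
  have "(\<Sum>k\<le>m. Bw k (coset v) * ((CARD('a option) - k) choose (m - k)))
      = (\<Sum>T | card T = m. card (coset v \<inter> supported_on T))"
    by (rule sum_card_supported_on[symmetric])
  also have "\<dots> = (\<Sum>T | card T = m. card (Ccode \<inter> supported_on T :: ('a option \<Rightarrow> 'a) set))"
    using assms by (intro sum.cong refl card_coset_supported_on) simp
  also have "\<dots> = (\<Sum>k\<le>m. Bw k (Ccode :: ('a option \<Rightarrow> 'a) set) * ((CARD('a option) - k) choose (m - k)))"
    by (rule sum_card_supported_on)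
  finally show ?thesis .
qed

lemma sum_Bw_diff_choose_eq_0:
  fixes va vb :: "'a::{finite,field} option \<Rightarrow> 'a"
  assumes "4 \<le> m"
  shows "(\<Sum>k\<le>m. (int (Bw k (coset va)) - int (Bw k (coset vb)))
           * of_nat ((CARD('a option) - k) choose (m - k))) = 0"
proof -
  let ?C = "\<lambda>k. (CARD('a option) - k) choose (m - k)"
  have "(\<Sum>k\<le>m. Bw k (coset va) * ?C k) = (\<Sum>k\<le>m. Bw k (coset vb) * ?C k)"
    using sum_Bw_coset_choose_eq[OF assms, of va] sum_Bw_coset_choose_eq[OF assms, of vb]
    by simp
  then have "(\<Sum>k\<le>m. int (Bw k (coset va)) * int (?C k))
      = (\<Sum>k\<le>m. int (Bw k (coset vb)) * int (?C k))"
    by (simp only: of_nat_sum [symmetric] of_nat_mult [symmetric])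
  then show ?thesis
    by (simp add: left_diff_distrib sum_subtractf)
qed

lemma Bw_below_3_eq:
  fixes va vb :: "'a::{finite,field} option \<Rightarrow> 'a"
  assumes "W \<in> {2, 3}"
    and "coset_weight (coset va) = W" and "coset_weight (coset vb) = W"
    and "k < 3"
  shows "Bw k (coset va) = Bw k (coset vb)"
proof (cases "k < W")
  case True
  then show ?thesis
    using assms(2,3) by (simp add: Bw_eq_0_if_less_coset_weight)
next
  case False
  then have "k = 2" "W = 2"
    using assms(1,4) by auto
  then show ?thesis
    using assms(2,3) by (simp add: Bw_2_if_coset_weight_2)
qed

theorem theorem5p1:
  fixes va vb :: "'a::{finite,field} option \<Rightarrow> 'a" and W w :: nat
  assumes "CARD('a) \<ge> 5"
    and "W \<in> {2, 3}"
    and "coset_weight (coset va) = W" and "coset_weight (coset vb) = W"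
    and "(\<lambda>k. Bw k (coset va)) \<noteq> (\<lambda>k. Bw k (coset vb))"
    and "4 \<le> w" and "w \<le> CARD('a) + 1"
  shows "int (Bw w (coset va)) - int (Bw w (coset vb))
       = - ((-1) ^ w) * (int (Bw 3 (coset va)) - int (Bw 3 (coset vb)))
         * int ((CARD('a) - 2) choose (w - 3))"
proof -
  define d where "d k = int (Bw k (coset va)) - int (Bw k (coset vb))" for k
  have "d w = (-1) ^ (w - 3) * of_nat ((CARD('a option) - 3) choose (w - 3)) * d 3"
  proof (rule binomial_triangular_system_shift)
    show "d k = 0" if "k < 3" for k
      using Bw_below_3_eq[OF assms(2-4) that] by (simp add: d_def)
    show "(\<Sum>k\<le>m. d k * of_nat ((CARD('a option) - k) choose (m - k))) = 0" if "3 < m" for m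
      using sum_Bw_diff_choose_eq_0[of m va vb] that by (simp add: d_def)
  qed (use assms(6,7) in \<open>auto simp: card_UNIV_option\<close>)
  moreover have "(-1 :: int) ^ (w - 3) = - ((-1) ^ w)"
  proof -
    obtain u where "w = 3 + u"
      using le_Suc_ex[of 3 w] assms(6) by auto
    then show ?thesis
      by (simp add: power_add)
  qed
  ultimately have "d w = - ((-1) ^ w) * d 3 * int ((CARD('a) - 2) choose (w - 3))"
    by (simp add: card_UNIV_option mult_ac)
  then show ?thesis
    by (simp only: d_def)
qed

end
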